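(* Let $H$ be a real Hilbert space, $A:H\to 2^H$ a maximally monotone operator, and $(\gamma_n)$ a sequence of positive reals. Then the family $(J_{\gamma_nA})_{n\in\mathbb{N}}$ is jointly firmly nonexpansive with respect to $(\gamma_n)$.
   Context: For $\gamma>0$, $J_{\gamma A}:=(id_H+\gamma A)^{-1}$, which is single-valued and defined on all of $H$. $(T_n)$ is jointly firmly nonexpansive w.r.t. $(\gamma_n)$ if for all $n,m\in\mathbb{N}$, $x,y\in H$, $\alpha,\beta\in[0,1]$ with $(1-\alpha)\gamma_n=(1-\beta)\gamma_m$: $\|T_nx-T_my\|\le\|((1-\alpha)x+\alpha T_nx)-((1-\beta)y+\beta T_my)\|$. *)

theory Defs
  imports "HOL-Analysis.Analysis"
begin

definition monotone_operator :: "('a::real_inner \<Rightarrow> 'a set) \<Rightarrow> bool" where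
  "monotone_operator A \<longleftrightarrow>
     (\<forall>x y u v. u \<in> A x \<longrightarrow> v \<in> A y \<longrightarrow> 0 \<le> inner (x - y) (u - v))"

definition maximally_monotone :: "('a::real_inner \<Rightarrow> 'a set) \<Rightarrow> bool" where
  "maximally_monotone A \<longleftrightarrow> monotone_operator A \<and>
     (\<forall>B. monotone_operator B \<and> (\<forall>x. A x \<subseteq> B x) \<longrightarrow> B = A)"

text \<open>Resolvent J_{\<gamma>A} = (id + \<gamma>A)^{-1}: J x is the point p with x \<in> p + \<gamma> A p.\<close>
definition resolvent :: "real \<Rightarrow> ('a::real_inner \<Rightarrow> 'a set) \<Rightarrow> 'a \<Rightarrow> 'a" where
  "resolvent \<gamma> A x = (THE p. x \<in> (\<lambda>u. p + \<gamma> *\<^sub>R u) ` A p)"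

definition jointly_firmly_nonexpansive ::
  "(nat \<Rightarrow> 'a::real_normed_vector \<Rightarrow> 'a) \<Rightarrow> (nat \<Rightarrow> real) \<Rightarrow> bool" where
  "jointly_firmly_nonexpansive T \<gamma> \<longleftrightarrow>
     (\<forall>n m x y \<alpha> \<beta>. \<alpha> \<in> {0..1} \<longrightarrow> \<beta> \<in> {0..1} \<longrightarrow>
        (1 - \<alpha>) * \<gamma> n = (1 - \<beta>) * \<gamma> m \<longrightarrow>
        norm (T n x - T m y) \<le>
          norm (((1 - \<alpha>) *\<^sub>R x + \<alpha> *\<^sub>R T n x) - ((1 - \<beta>) *\<^sub>R y + \<beta> *\<^sub>R T m y)))"

end

theory Submission
  imports Defs
begin

text \<open>The resolvents are well defined by Minty's theorem: for a maximally monotone A and c > 0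
  every x lies in the range of id + c A, and the preimage is unique by monotonicity. Minty's
  theorem reduces, after shifting and rescaling A, to finding p with -p \<in> A p. Such a p is
  obtained from the Fitzpatrick function F of A: the strongly convex function
  F z + |z|^2/2 on H \<times> H attains its infimum (minimizing sequences are Cauchy), and the
  variational inequality at a minimizer, combined with F z \<ge> \<langle>x, u\<rangle> for z = (x, u), produces
  the required point. Finally, writing x = J_n x + \<gamma>_n u and y = J_m y + \<gamma>_m v, the condition
  (1 - \<alpha>) \<gamma>_n = (1 - \<beta>) \<gamma>_m = c turns the right-hand side of the joint firm nonexpansiveness
  inequality into |(J_n x - J_m y) + c (u - v)|, which dominates |J_n x - J_m y| since
  \<langle>J_n x - J_m y, u - v\<rangle> \<ge> 0.\<close>

lemma nonneg_if_nonneg_add_small_multiples: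
  fixes a b :: real
  assumes "b \<ge> 0" and small: "\<And>t. 0 < t \<Longrightarrow> t \<le> 1 \<Longrightarrow> 0 \<le> a + t * b"
  shows "0 \<le> a"
proof (rule ccontr)
  assume "\<not> 0 \<le> a"
  define t where "t = min 1 (- a / (2 * b + 1))"
  have "0 < 2 * b + 1" using \<open>b \<ge> 0\<close> by simp
  then have "0 < t" using \<open>\<not> 0 \<le> a\<close> by (simp add: t_def divide_neg_pos)
  moreover have "t * b \<le> - a / (2 * b + 1) * b"
    using \<open>b \<ge> 0\<close> by (intro mult_right_mono) (auto simp: t_def)
  moreover have "- a / (2 * b + 1) * b < - a"
    using \<open>\<not> 0 \<le> a\<close> \<open>b \<ge> 0\<close> by (simp add: divide_simps)
  ultimately show False using small[of t] by (simp add: t_def)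
qed

lemma norm_le_norm_add_scaled:
  fixes a b :: "'a::real_inner"
  assumes "0 \<le> inner a b" and "0 \<le> c"
  shows "norm a \<le> norm (a + c *\<^sub>R b)"
proof (rule power2_le_imp_le)
  have "(norm (a + c *\<^sub>R b))\<^sup>2 = (norm a)\<^sup>2 + 2 * c * inner a b + c\<^sup>2 * (norm b)\<^sup>2"
    unfolding power2_norm_eq_inner
    by (simp add: inner_commute power2_eq_square algebra_simps)
  then show "(norm a)\<^sup>2 \<le> (norm (a + c *\<^sub>R b))\<^sup>2"
    using assms by simp
qed simp

subsection \<open>Maximal monotonicity\<close>

lemma maximally_monotone_iff:
  "maximally_monotone A \<longleftrightarrow> monotone_operator A \<and>
     (\<forall>p a. (\<forall>y v. v \<in> A y \<longrightarrow> 0 \<le> inner (p - y) (a - v)) \<longrightarrow> a \<in> A p)"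
  (is "_ \<longleftrightarrow> _ \<and> ?closed")
proof
  assume max: "maximally_monotone A"
  then have mono: "monotone_operator A"
    by (simp add: maximally_monotone_def)
  have "a \<in> A p" if related: "\<And>y v. v \<in> A y \<Longrightarrow> 0 \<le> inner (p - y) (a - v)" for p a
  proof -
    define B where "B x = A x \<union> (if x = p then {a} else {})" for x
    have swapped: "0 \<le> inner (x - p) (u - a)" if "u \<in> A x" for x u
      using related[OF that] by (metis inner_minus_left inner_minus_right minus_diff_eq)
    have "0 \<le> inner (x - y) (u - v)" if "u \<in> B x" "v \<in> B y" for x y u v
      using that mono related[of v y] swapped[of u x]
      unfolding B_def monotone_operator_def by (auto split: if_splits)
    then have "monotone_operator B"
      unfolding monotone_operator_def by blast
    then have "B = A"
      using max unfolding maximally_monotone_def B_def by blast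
    moreover have "a \<in> B p"
      by (simp add: B_def)
    ultimately show "a \<in> A p"
      by simp
  qed
  with mono show "monotone_operator A \<and> ?closed" by blast
next
  assume "monotone_operator A \<and> ?closed"
  then have mono: "monotone_operator A" and closed: ?closed by auto
  have "B = A" if "monotone_operator B" and "\<forall>x. A x \<subseteq> B x" for B
  proof -
    have "a \<in> A p" if "a \<in> B p" for p a
      using closed \<open>a \<in> B p\<close> \<open>monotone_operator B\<close> \<open>\<forall>x. A x \<subseteq> B x\<close>
      unfolding monotone_operator_def by blast
    with \<open>\<forall>x. A x \<subseteq> B x\<close> show "B = A" by blast
  qed
  with mono show "maximally_monotone A"
    by (simp add: maximally_monotone_def)
qed

lemma maximally_monotone_shift_scale:
  assumes "maximally_monotone A" and "c > 0"
  shows "maximally_monotone (\<lambda>q. (\<lambda>u. c *\<^sub>R u) ` A (q + x))"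
proof -
  from assms(1) have mono: "monotone_operator A"
    and closed: "\<And>p a. (\<And>y v. v \<in> A y \<Longrightarrow> 0 \<le> inner (p - y) (a - v)) \<Longrightarrow> a \<in> A p"
    by (auto simp: maximally_monotone_iff)
  have "monotone_operator (\<lambda>q. (\<lambda>u. c *\<^sub>R u) ` A (q + x))"
    unfolding monotone_operator_def
  proof clarify
    fix q q' u v assume "u \<in> A (q + x)" "v \<in> A (q' + x)"
    with mono have "0 \<le> inner ((q + x) - (q' + x)) (u - v)"
      unfolding monotone_operator_def by blast
    then show "0 \<le> inner (q - q') (c *\<^sub>R u - c *\<^sub>R v)"
      using \<open>c > 0\<close> by (simp flip: scaleR_diff_right)
  qed
  moreover have "a \<in> (\<lambda>u. c *\<^sub>R u) ` A (p + x)"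
    if related: "\<And>y v. v \<in> (\<lambda>u. c *\<^sub>R u) ` A (y + x) \<Longrightarrow> 0 \<le> inner (p - y) (a - v)" for p a
  proof -
    have "inverse c *\<^sub>R a \<in> A (p + x)"
    proof (rule closed)
      fix y v assume "v \<in> A y"
      then have "0 \<le> inner (p - (y - x)) (a - c *\<^sub>R v)"
        by (intro related) auto
      also have "a - c *\<^sub>R v = c *\<^sub>R (inverse c *\<^sub>R a - v)"
        using \<open>c > 0\<close> by (simp add: algebra_simps)
      finally have "0 \<le> c * inner (p + x - y) (inverse c *\<^sub>R a - v)"
        by (simp add: algebra_simps)
      then show "0 \<le> inner (p + x - y) (inverse c *\<^sub>R a - v)"
        using \<open>c > 0\<close> by (simp add: zero_le_mult_iff)
    qed
    moreover have "a = c *\<^sub>R (inverse c *\<^sub>R a)"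
      using \<open>c > 0\<close> by simp
    ultimately show ?thesis by blast
  qed
  ultimately show ?thesis
    by (simp add: maximally_monotone_iff)
qed

subsection \<open>The Fitzpatrick function\<close>

locale maximally_monotone_operator =
  fixes A :: "'a::real_inner \<Rightarrow> 'a set"
  assumes maximally_monotone: "maximally_monotone A"
begin

lemma monotone: "u \<in> A x \<Longrightarrow> v \<in> A y \<Longrightarrow> 0 \<le> inner (x - y) (u - v)"
  using maximally_monotone by (auto simp: maximally_monotone_def monotone_operator_def)

lemma mem_if_monotonically_related:
  "(\<And>y v. v \<in> A y \<Longrightarrow> 0 \<le> inner (p - y) (a - v)) \<Longrightarrow> a \<in> A p"
  using maximally_monotone by (auto simp: maximally_monotone_iff)

definition graph :: "('a \<times> 'a) set" where
  "graph = {(y, v). v \<in> A y}"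

definition coupling :: "'a \<times> 'a \<Rightarrow> 'a \<times> 'a \<Rightarrow> real" where
  "coupling w z = inner (fst z) (snd w) + inner (fst w) (snd z) - inner (fst w) (snd w)"

text \<open>The supremum is only meaningful where it is bounded, hence the explicit domain.\<close>

definition fitzpatrick_dom :: "('a \<times> 'a) set" where
  "fitzpatrick_dom = {z. bdd_above ((\<lambda>w. coupling w z) ` graph)}"

definition fitzpatrick :: "'a \<times> 'a \<Rightarrow> real" where
  "fitzpatrick z = Sup ((\<lambda>w. coupling w z) ` graph)"

definition fitzpatrick_reg :: "'a \<times> 'a \<Rightarrow> real" where
  "fitzpatrick_reg z = fitzpatrick z + inner z z / 2"

definition fitzpatrick_reg_inf :: real where
  "fitzpatrick_reg_inf = Inf (fitzpatrick_reg ` fitzpatrick_dom)"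

lemma graph_nonempty: "graph \<noteq> {}"
proof
  assume "graph = {}"
  then have "0 \<in> A 0"
    by (intro mem_if_monotonically_related) (auto simp: graph_def)
  with \<open>graph = {}\<close> show False
    by (auto simp: graph_def)
qed

lemma coupling_le_fitzpatrick: "z \<in> fitzpatrick_dom \<Longrightarrow> w \<in> graph \<Longrightarrow> coupling w z \<le> fitzpatrick z"
  unfolding fitzpatrick_dom_def fitzpatrick_def by (auto intro: cSup_upper)

lemma fitzpatrick_dom_le:
  assumes "\<And>w. w \<in> graph \<Longrightarrow> coupling w z \<le> b"
  shows "z \<in> fitzpatrick_dom" and "fitzpatrick z \<le> b"
proof -
  show "z \<in> fitzpatrick_dom"
    unfolding fitzpatrick_dom_def mem_Collect_eq using assms by (intro bdd_aboveI2) auto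
  show "fitzpatrick z \<le> b"
    unfolding fitzpatrick_def using assms graph_nonempty by (intro cSup_least) auto
qed

lemma inner_le_fitzpatrick:
  assumes "z \<in> fitzpatrick_dom"
  shows "inner (fst z) (snd z) \<le> fitzpatrick z"
proof (rule ccontr)
  assume less: "\<not> ?thesis"
  obtain x u where z: "z = (x, u)" by (cases z)
  have "u \<in> A x"
  proof (rule mem_if_monotonically_related)
    fix y v assume "v \<in> A y"
    then have "coupling (y, v) z < inner x u"
      using coupling_le_fitzpatrick[OF assms, of "(y, v)"] less by (simp add: graph_def z)
    then show "0 \<le> inner (x - y) (u - v)"
      by (simp add: coupling_def z inner_diff_left inner_diff_right inner_commute)
  qed
  then show False
    using coupling_le_fitzpatrick[OF assms, of z] less by (simp add: graph_def coupling_def z)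
qed

lemma fitzpatrick_on_graph:
  assumes "w \<in> graph"
  shows "w \<in> fitzpatrick_dom" and "fitzpatrick w \<le> inner (fst w) (snd w)"
proof -
  have "coupling w' w \<le> inner (fst w) (snd w)" if "w' \<in> graph" for w'
  proof -
    have "0 \<le> inner (fst w - fst w') (snd w - snd w')"
      using assms that by (auto simp: graph_def intro: monotone)
    then show ?thesis
      by (simp add: coupling_def inner_diff_left inner_diff_right inner_commute)
  qed
  then show "w \<in> fitzpatrick_dom" and "fitzpatrick w \<le> inner (fst w) (snd w)"
    by (blast intro: fitzpatrick_dom_le)+
qed

lemma fitzpatrick_convex:
  assumes "z1 \<in> fitzpatrick_dom" "z2 \<in> fitzpatrick_dom" "0 \<le> t" "t \<le> 1"
  shows "(1 - t) *\<^sub>R z1 + t *\<^sub>R z2 \<in> fitzpatrick_dom"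
    and "fitzpatrick ((1 - t) *\<^sub>R z1 + t *\<^sub>R z2) \<le> (1 - t) * fitzpatrick z1 + t * fitzpatrick z2"
proof -
  have "coupling w ((1 - t) *\<^sub>R z1 + t *\<^sub>R z2) \<le> (1 - t) * fitzpatrick z1 + t * fitzpatrick z2"
    if "w \<in> graph" for w
  proof -
    have "coupling w ((1 - t) *\<^sub>R z1 + t *\<^sub>R z2) = (1 - t) * coupling w z1 + t * coupling w z2"
      by (simp add: coupling_def algebra_simps)
    also have "\<dots> \<le> (1 - t) * fitzpatrick z1 + t * fitzpatrick z2"
      using assms coupling_le_fitzpatrick[OF _ that]
      by (intro add_mono mult_left_mono) auto
    finally show ?thesis .
  qed
  then show "(1 - t) *\<^sub>R z1 + t *\<^sub>R z2 \<in> fitzpatrick_dom"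
    and "fitzpatrick ((1 - t) *\<^sub>R z1 + t *\<^sub>R z2) \<le> (1 - t) * fitzpatrick z1 + t * fitzpatrick z2"
    by (blast intro: fitzpatrick_dom_le)+
qed

lemma fitzpatrick_reg_nonneg:
  assumes "z \<in> fitzpatrick_dom"
  shows "0 \<le> fitzpatrick_reg z"
proof -
  obtain x u where z: "z = (x, u)" by (cases z)
  have "inner (x + u) (x + u) = inner x x + 2 * inner x u + inner u u"
    by (simp add: inner_add_left inner_add_right inner_commute)
  then have "0 \<le> inner x u + (inner x x + inner u u) / 2"
    using inner_ge_zero[of "x + u"] by argo
  then show ?thesis
    using inner_le_fitzpatrick[OF assms] by (simp add: fitzpatrick_reg_def z)
qed

lemma fitzpatrick_reg_inf_le: "z \<in> fitzpatrick_dom \<Longrightarrow> fitzpatrick_reg_inf \<le> fitzpatrick_reg z"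
  unfolding fitzpatrick_reg_inf_def
  by (rule cInf_lower) (auto intro: bdd_belowI2 fitzpatrick_reg_nonneg)

text \<open>Strong convexity: the midpoint of z1 and z2 has regularized value at least the infimum.\<close>

lemma fitzpatrick_reg_dist_bound:
  assumes "z1 \<in> fitzpatrick_dom" "z2 \<in> fitzpatrick_dom"
  shows "inner (z1 - z2) (z1 - z2)
    \<le> 4 * (fitzpatrick_reg z1 + fitzpatrick_reg z2 - 2 * fitzpatrick_reg_inf)"
proof -
  define mid where "mid = (1 - 1/2) *\<^sub>R z1 + (1/2) *\<^sub>R z2"
  have mid_dom: "mid \<in> fitzpatrick_dom"
    and mid_le: "fitzpatrick mid \<le> (1 - 1/2) * fitzpatrick z1 + (1/2) * fitzpatrick z2"
    using fitzpatrick_convex[OF assms, of "1/2"] by (auto simp: mid_def)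
  have "fitzpatrick_reg_inf \<le> fitzpatrick_reg mid"
    using mid_dom by (rule fitzpatrick_reg_inf_le)
  moreover have "inner mid mid = (inner z1 z1 + inner z2 z2) / 2 - inner (z1 - z2) (z1 - z2) / 4"
    unfolding mid_def
    by (simp add: inner_commute algebra_simps) (simp add: field_simps)
  ultimately show ?thesis
    using mid_le unfolding fitzpatrick_reg_def by (simp add: field_simps)
qed

lemma minimizing_sequence_Cauchy:
  assumes dom: "\<And>k. zs k \<in> fitzpatrick_dom"
    and almost_min: "\<And>k. fitzpatrick_reg (zs k) < fitzpatrick_reg_inf + inverse (real (Suc k))"
  shows "Cauchy zs"
  unfolding Cauchy_def
proof (intro allI impI)
  fix e :: real assume "0 < e"
  obtain N where N: "inverse (real (Suc N)) < e\<^sup>2 / 8"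
    using reals_Archimedean[of "e\<^sup>2 / 8"] \<open>0 < e\<close> by auto
  have "dist (zs i) (zs j) < e" if "N \<le> i" "N \<le> j" for i j
  proof -
    have "inverse (real (Suc i)) \<le> inverse (real (Suc N))"
      and "inverse (real (Suc j)) \<le> inverse (real (Suc N))"
      using that by (simp_all add: field_simps)
    then have "fitzpatrick_reg (zs i) + fitzpatrick_reg (zs j) - 2 * fitzpatrick_reg_inf
        < 2 * inverse (real (Suc N))"
      using almost_min[of i] almost_min[of j] by linarith
    then have "4 * (fitzpatrick_reg (zs i) + fitzpatrick_reg (zs j) - 2 * fitzpatrick_reg_inf) < e\<^sup>2"
      using N by argo
    then have "(norm (zs i - zs j))\<^sup>2 < e\<^sup>2"
      using fitzpatrick_reg_dist_bound[OF dom dom, of i j] by (simp add: power2_norm_eq_inner)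
    then show ?thesis
      using \<open>0 < e\<close> by (simp add: dist_norm power_less_imp_less_base)
  qed
  then show "\<exists>M. \<forall>i\<ge>M. \<forall>j\<ge>M. dist (zs i) (zs j) < e" by blast
qed

lemma fitzpatrick_reg_minimizer:
  assumes "x0 \<in> fitzpatrick_dom" "fitzpatrick_reg x0 \<le> fitzpatrick_reg_inf" and "w \<in> graph"
  shows "0 \<le> inner (fst w) (snd w) - fitzpatrick x0 + inner x0 (w - x0)"
proof (rule nonneg_if_nonneg_add_small_multiples)
  fix t :: real assume "0 < t" "t \<le> 1"
  define zt where "zt = (1 - t) *\<^sub>R x0 + t *\<^sub>R w"
  have w_dom: "w \<in> fitzpatrick_dom" and w_le: "fitzpatrick w \<le> inner (fst w) (snd w)"
    using fitzpatrick_on_graph[OF assms(3)] by auto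
  have "zt \<in> fitzpatrick_dom"
    and zt_le: "fitzpatrick zt \<le> (1 - t) * fitzpatrick x0 + t * fitzpatrick w"
    using fitzpatrick_convex[OF assms(1) w_dom, of t] \<open>0 < t\<close> \<open>t \<le> 1\<close> by (auto simp: zt_def)
  then have "fitzpatrick_reg x0 \<le> fitzpatrick_reg zt"
    using assms(2) fitzpatrick_reg_inf_le by fastforce
  moreover have "t * fitzpatrick w \<le> t * inner (fst w) (snd w)"
    using w_le \<open>0 < t\<close> by simp
  moreover have "inner zt zt = inner x0 x0 + 2 * t * inner x0 (w - x0) + t\<^sup>2 * inner (w - x0) (w - x0)"
    unfolding zt_def
    by (simp add: inner_commute power2_eq_square algebra_simps)
  ultimately have "fitzpatrick x0 + inner x0 x0 / 2 \<le> (1 - t) * fitzpatrick x0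
      + t * inner (fst w) (snd w) + (inner x0 x0 + 2 * t * inner x0 (w - x0)
      + t\<^sup>2 * inner (w - x0) (w - x0)) / 2"
    using zt_le unfolding fitzpatrick_reg_def by argo
  moreover have "t * (inner (fst w) (snd w) - fitzpatrick x0 + inner x0 (w - x0)
      + t * (inner (w - x0) (w - x0) / 2))
    = (1 - t) * fitzpatrick x0 + t * inner (fst w) (snd w) + (inner x0 x0
      + 2 * t * inner x0 (w - x0) + t\<^sup>2 * inner (w - x0) (w - x0)) / 2
      - (fitzpatrick x0 + inner x0 x0 / 2)"
    by (simp add: field_simps power2_eq_square)
  ultimately have "0 \<le> t * (inner (fst w) (snd w) - fitzpatrick x0 + inner x0 (w - x0)
      + t * (inner (w - x0) (w - x0) / 2))"
    by linarith
  then show "0 \<le> inner (fst w) (snd w) - fitzpatrick x0 + inner x0 (w - x0)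
      + t * (inner (w - x0) (w - x0) / 2)"
    using \<open>0 < t\<close> by (simp add: zero_le_mult_iff)
qed simp

end

locale complete_maximally_monotone_operator = maximally_monotone_operator A
  for A :: "'a::{real_inner, complete_space} \<Rightarrow> 'a set"
begin

lemma fitzpatrick_reg_attains_inf:
  obtains z where "z \<in> fitzpatrick_dom" "fitzpatrick_reg z \<le> fitzpatrick_reg_inf"
proof -
  have "\<exists>z\<in>fitzpatrick_dom. fitzpatrick_reg z < fitzpatrick_reg_inf + inverse (real (Suc k))" for k
    using graph_nonempty fitzpatrick_on_graph(1)
    unfolding fitzpatrick_reg_inf_def
    by (intro cInf_lessD[of "fitzpatrick_reg ` fitzpatrick_dom", simplified]) auto
  then obtain zs where dom: "\<And>k. zs k \<in> fitzpatrick_dom"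
    and almost_min: "\<And>k. fitzpatrick_reg (zs k) < fitzpatrick_reg_inf + inverse (real (Suc k))"
    by metis
  then obtain z where lim: "zs \<longlonglongrightarrow> z"
    using minimizing_sequence_Cauchy Cauchy_convergent convergent_def by blast
  have "coupling w z \<le> fitzpatrick_reg_inf - inner z z / 2" if "w \<in> graph" for w
  proof -
    have "coupling w (zs k) \<le> fitzpatrick_reg_inf + inverse (real (Suc k)) - inner (zs k) (zs k) / 2"
      for k
      using coupling_le_fitzpatrick[OF dom[of k] that] almost_min[of k]
      unfolding fitzpatrick_reg_def by argo
    moreover have "(\<lambda>k. coupling w (zs k)) \<longlonglongrightarrow> coupling w z"
      unfolding coupling_def by (intro tendsto_intros lim)
    moreover have "(\<lambda>k. fitzpatrick_reg_inf + inverse (real (Suc k)) - inner (zs k) (zs k) / 2)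
        \<longlonglongrightarrow> fitzpatrick_reg_inf + 0 - inner z z / 2"
      by (intro tendsto_intros lim LIMSEQ_inverse_real_of_nat) simp
    ultimately show ?thesis
      using LIMSEQ_le by fastforce
  qed
  then have "z \<in> fitzpatrick_dom" "fitzpatrick z \<le> fitzpatrick_reg_inf - inner z z / 2"
    by (blast intro: fitzpatrick_dom_le)+
  then show thesis
    by (intro that) (auto simp: fitzpatrick_reg_def)
qed

lemma exists_minus_mem_self: "\<exists>p. - p \<in> A p"
proof -
  obtain z where "z \<in> fitzpatrick_dom" "fitzpatrick_reg z \<le> fitzpatrick_reg_inf"
    by (rule fitzpatrick_reg_attains_inf)
  moreover obtain x u where xu: "z = (x, u)" by (cases z)
  ultimately have le: "inner x u \<le> fitzpatrick z"
    and variational: "\<And>y v. v \<in> A y \<Longrightarrow>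
      0 \<le> inner y v - fitzpatrick z + inner x (y - x) + inner u (v - u)"
    using inner_le_fitzpatrick fitzpatrick_reg_minimizer by (force simp: graph_def)+
  text \<open>Adding |x + u|^2 \<ge> 0 to the variational inequality shows that (-u, -x) is monotonically
    related to the graph; applied to (-u, -x) itself it gives x + u = 0.\<close>
  have mem: "- x \<in> A (- u)"
  proof (rule mem_if_monotonically_related)
    fix y v assume "v \<in> A y"
    have "0 \<le> inner (x + u) (x + u)" by simp
    then show "0 \<le> inner (- u - y) (- x - v)"
      using variational[OF \<open>v \<in> A y\<close>] le
      by (simp add: inner_commute algebra_simps)
  qed
  have "inner (x + u) (x + u) \<le> 0"
    using variational[OF mem] le
    by (simp add: inner_commute algebra_simps)
  then have "inner (x + u) (x + u) = 0"
    using inner_ge_zero[of "x + u"] by argo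
  then have "u = - x"
    by (simp add: add_eq_0_iff)
  with mem show ?thesis by auto
qed

end

subsection \<open>Resolvents\<close>

lemma minty_surjective:
  fixes A :: "'a::{real_inner, complete_space} \<Rightarrow> 'a set"
  assumes "maximally_monotone A" and "c > 0"
  shows "\<exists>p. \<exists>u\<in>A p. x = p + c *\<^sub>R u"
proof -
  interpret complete_maximally_monotone_operator "\<lambda>q. (\<lambda>u. c *\<^sub>R u) ` A (q + x)"
    using maximally_monotone_shift_scale[OF assms] by unfold_locales
  obtain q u where "u \<in> A (q + x)" "- q = c *\<^sub>R u"
    using exists_minus_mem_self by blast
  then have "x = (q + x) + c *\<^sub>R u" "u \<in> A (q + x)"
    by (simp_all flip: \<open>- q = c *\<^sub>R u\<close>)
  then show ?thesis by blast
qed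

lemma resolvent_preimage_unique:
  assumes "monotone_operator A" and "c > 0"
    and "u \<in> A p" "v \<in> A q" "p + c *\<^sub>R u = q + c *\<^sub>R v"
  shows "p = q"
proof -
  have "p - q = c *\<^sub>R (v - u)"
    using assms(5) by (simp add: algebra_simps)
  moreover have "0 \<le> inner (p - q) (u - v)"
    using assms(1,3,4) unfolding monotone_operator_def by blast
  ultimately have "0 \<le> c * inner (v - u) (u - v)"
    by simp
  then have "inner (v - u) (v - u) \<le> 0"
    using \<open>c > 0\<close> by (simp add: zero_le_mult_iff inner_diff_left inner_diff_right inner_commute)
  then have "inner (v - u) (v - u) = 0"
    using inner_ge_zero[of "v - u"] by argo
  then have "u = v" by simp
  with assms(5) show "p = q" by simp
qed

lemma resolvent_characterization:
  fixes A :: "'a::{real_inner, complete_space} \<Rightarrow> 'a set"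
  assumes "maximally_monotone A" and "c > 0"
  obtains u where "u \<in> A (resolvent c A x)" "x = resolvent c A x + c *\<^sub>R u"
proof -
  have "\<exists>!p. x \<in> (\<lambda>u. p + c *\<^sub>R u) ` A p"
  proof (rule ex_ex1I)
    show "\<exists>p. x \<in> (\<lambda>u. p + c *\<^sub>R u) ` A p"
      using minty_surjective[OF assms, of x] by auto
    show "p = q" if "x \<in> (\<lambda>u. p + c *\<^sub>R u) ` A p" "x \<in> (\<lambda>u. q + c *\<^sub>R u) ` A q" for p q
      using that assms resolvent_preimage_unique
      by (force simp: maximally_monotone_def)
  qed
  then have "x \<in> (\<lambda>u. resolvent c A x + c *\<^sub>R u) ` A (resolvent c A x)"
    unfolding resolvent_def by (rule theI')
  then show thesis
    using that by blast
qed

theorem proposition3p21: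
  fixes A :: "'a::{real_inner, complete_space} \<Rightarrow> 'a set"
    and \<gamma> :: "nat \<Rightarrow> real"
  assumes "maximally_monotone A"
    and "\<And>n. \<gamma> n > 0"
  shows "jointly_firmly_nonexpansive (\<lambda>n. resolvent (\<gamma> n) A) \<gamma>"
  unfolding jointly_firmly_nonexpansive_def
proof (intro allI impI)
  fix n m x y and \<alpha> \<beta> :: real
  assume "\<alpha> \<in> {0..1}" "\<beta> \<in> {0..1}" and same_step: "(1 - \<alpha>) * \<gamma> n = (1 - \<beta>) * \<gamma> m"
  define p q where "p = resolvent (\<gamma> n) A x" and "q = resolvent (\<gamma> m) A y"
  obtain u v where "u \<in> A p" "x = p + \<gamma> n *\<^sub>R u" and "v \<in> A q" "y = q + \<gamma> m *\<^sub>R v"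
    using resolvent_characterization[OF assms(1,2)] unfolding p_def q_def by metis
  define c where "c = (1 - \<alpha>) * \<gamma> n"
  have "0 \<le> inner (p - q) (u - v)"
    using assms(1) \<open>u \<in> A p\<close> \<open>v \<in> A q\<close>
    by (auto simp: maximally_monotone_def monotone_operator_def)
  moreover have "0 \<le> c"
    using \<open>\<alpha> \<in> {0..1}\<close> assms(2)[of n] by (simp add: c_def)
  ultimately have "norm (p - q) \<le> norm ((p - q) + c *\<^sub>R (u - v))"
    by (rule norm_le_norm_add_scaled)
  also have "(p - q) + c *\<^sub>R (u - v) = (p + c *\<^sub>R u) - (q + c *\<^sub>R v)"
    by (simp add: algebra_simps)
  also have "p + c *\<^sub>R u = (1 - \<alpha>) *\<^sub>R x + \<alpha> *\<^sub>R p"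
    unfolding \<open>x = p + \<gamma> n *\<^sub>R u\<close> c_def by (simp add: algebra_simps)
  also have "q + c *\<^sub>R v = (1 - \<beta>) *\<^sub>R y + \<beta> *\<^sub>R q"
    unfolding \<open>y = q + \<gamma> m *\<^sub>R v\<close> c_def same_step by (simp add: algebra_simps)
  finally show "norm (resolvent (\<gamma> n) A x - resolvent (\<gamma> m) A y)
      \<le> norm (((1 - \<alpha>) *\<^sub>R x + \<alpha> *\<^sub>R resolvent (\<gamma> n) A x)
        - ((1 - \<beta>) *\<^sub>R y + \<beta> *\<^sub>R resolvent (\<gamma> m) A y))"
    unfolding p_def q_def .
qed

end
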